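(* Let $A \in \mathbb{C}^{n \times n}$, and fix $A^-\in A\{1\}$ and $A^{GD}\in A\{GD\}$. For $X\in\mathbb{C}^{n\times n}$ the following are equivalent: (i) $X = A^{GD}AA^{-}$; (ii) $XA=A^{GD}A$ and $N(X)=N(AA^{-})$; (iii) $XAA^{GD}=A^{GD}AA^{GD}$ and $N(X)=N(AA^{-})$.
   Context: For $A\in\mathbb{C}^{n\times n}$, $ind(A)$ is the smallest nonnegative integer $k$ with $\mathrm{rank}(A^k)=\mathrm{rank}(A^{k+1})$. $A\{1\}$ is the set of matrices $X$ with $AXA=A$. With $k=ind(A)$, $A\{GD\}$ is the set of G-Drazin inverses of $A$: matrices $X$ with $AXA=A$, $XA^{k+1}=A^k$, $A^{k+1}X=A^k$. $N(\cdot)$ denotes null space. The matrix $A^{GD}AA^-$ is called the GD1 inverse of $A$ associated with $A^-$ and $A^{GD}$. *)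

theory Defs
  imports "HOL-Analysis.Analysis"
begin

text \<open>Square complex matrices are modelled as complex^'n^'n, with n = CARD('n).\<close>

primrec mpow :: "'a::field^'n^'n \<Rightarrow> nat \<Rightarrow> 'a^'n^'n" where
  "mpow A 0 = mat 1"
| "mpow A (Suc k) = A ** mpow A k"

definition ind :: "'a::field^'n^'n \<Rightarrow> nat" where
  "ind A = (LEAST k. rank (mpow A k) = rank (mpow A (Suc k)))"

definition inner_inverses :: "'a::field^'n^'n \<Rightarrow> ('a^'n^'n) set" where
  "inner_inverses A = {X. A ** X ** A = A}"

definition GD_inverses :: "'a::field^'n^'n \<Rightarrow> ('a^'n^'n) set" where
  "GD_inverses A = {X. A ** X ** A = A
                      \<and> X ** mpow A (Suc (ind A)) = mpow A (ind A)
                      \<and> mpow A (Suc (ind A)) ** X = mpow A (ind A)}"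

definition null_space :: "'a::field^'n^'m \<Rightarrow> ('a^'n) set" where
  "null_space M = {x. M *v x = 0}"

end

theory Submission
  imports Defs
begin

text \<open>Since A H is
  idempotent, any X with N(A H) contained in N(X) satisfies X A H = X, hence X = G A H as soon
  as X A = G A. Conversely N(G A H) = N(A H) because A G (A H) = A H.
  Condition (iii) reduces to (ii) since Y A G determines Y A = Y A G A.\<close>

lemma GD_inverses_subset_inner_inverses: "GD_inverses A \<subseteq> inner_inverses A"
  by (auto simp: GD_inverses_def inner_inverses_def)

lemma inner_inverse_idempotent:
  assumes "H \<in> inner_inverses A"
  shows "(A ** H) ** (A ** H) = A ** H"
  using assms by (simp add: inner_inverses_def matrix_mul_assoc)

lemma matrix_mul_idempotent_absorb:
  fixes X P :: "'a::field^'n^'n"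
  assumes idem: "P ** P = P" and sub: "null_space P \<subseteq> null_space X"
  shows "X ** P = X"
proof (rule matrix_eq[THEN iffD2], intro allI)
  fix v
  have "P *v (v - P *v v) = 0"
    by (simp add: matrix_vector_mult_diff_distrib matrix_vector_mul_assoc idem)
  hence "X *v (v - P *v v) = 0" using sub by (auto simp: null_space_def)
  thus "(X ** P) *v v = X *v v"
    by (simp add: matrix_vector_mult_diff_distrib matrix_vector_mul_assoc)
qed

lemma null_space_matrix_mul_left_subset: "null_space B \<subseteq> null_space (C ** B)"
  by (auto simp: null_space_def simp flip: matrix_vector_mul_assoc)

lemma null_space_matrix_mul_left_eq:
  assumes "D ** C ** B = B"
  shows "null_space (C ** B) = null_space B"
proof
  show "null_space (C ** B) \<subseteq> null_space B"
    using null_space_matrix_mul_left_subset[of "C ** B" D] assms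
    by (simp add: matrix_mul_assoc)
qed (rule null_space_matrix_mul_left_subset)

lemma inner_inverse_cancel_right:
  assumes "G \<in> inner_inverses A"
  shows "X ** A ** G = Y ** A ** G \<longleftrightarrow> X ** A = Y ** A"
proof
  have AGA: "A ** G ** A = A"
    using assms by (simp add: inner_inverses_def)
  assume "X ** A ** G = Y ** A ** G"
  hence "X ** (A ** G ** A) = Y ** (A ** G ** A)"
    by (simp add: matrix_mul_assoc)
  thus "X ** A = Y ** A"
    by (simp only: AGA)
qed simp

lemma inner_inverse_product_iff:
  assumes G: "G \<in> inner_inverses A" and H: "H \<in> inner_inverses A"
  shows "X = G ** A ** H \<longleftrightarrow> X ** A = G ** A \<and> null_space X = null_space (A ** H)"
proof
  have "A ** G ** (A ** H) = (A ** G ** A) ** H"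
    by (simp add: matrix_mul_assoc)
  also have "\<dots> = A ** H"
    using G by (simp add: inner_inverses_def)
  finally have "null_space (G ** (A ** H)) = null_space (A ** H)"
    by (rule null_space_matrix_mul_left_eq)
  moreover have "G ** A ** H ** A = G ** (A ** H ** A)"
    by (simp add: matrix_mul_assoc)
  with H have "G ** A ** H ** A = G ** A"
    by (simp add: inner_inverses_def)
  ultimately show "X ** A = G ** A \<and> null_space X = null_space (A ** H)"
    if "X = G ** A ** H" using that by (simp add: matrix_mul_assoc)
next
  assume XA: "X ** A = G ** A \<and> null_space X = null_space (A ** H)"
  hence "X = X ** (A ** H)"
    using matrix_mul_idempotent_absorb[OF inner_inverse_idempotent[OF H]] by simp
  also have "\<dots> = X ** A ** H"
    by (simp add: matrix_mul_assoc)
  also have "\<dots> = G ** A ** H"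
    using XA by simp
  finally show "X = G ** A ** H" .
qed

theorem theorem2p6:
  fixes A Am AGD X :: "complex^'n^'n"
  assumes "Am \<in> inner_inverses A"
    and "AGD \<in> GD_inverses A"
  shows "(X = AGD ** A ** Am
          \<longleftrightarrow> (X ** A = AGD ** A \<and> null_space X = null_space (A ** Am)))
       \<and> (X = AGD ** A ** Am
          \<longleftrightarrow> (X ** A ** AGD = AGD ** A ** AGD \<and> null_space X = null_space (A ** Am)))"
proof -
  have AGD: "AGD \<in> inner_inverses A"
    using assms(2) GD_inverses_subset_inner_inverses by blast
  show ?thesis
    using inner_inverse_product_iff[OF AGD assms(1), of X]
      inner_inverse_cancel_right[OF AGD, of X AGD]
    by blast
qed

end
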